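(* Let $R$ be a commutative unital ring which is Noetherian and quasi-Euclidean. Let $\mathfrak{b}_1,\dots,\mathfrak{b}_k$ be proper ideals of $R$ and set $\mathfrak{b} = \mathfrak{b}_1 + \cdots + \mathfrak{b}_k$. Let $M = R/\mathfrak{b}_1 \times \cdots \times R/\mathfrak{b}_k$. For $\mathbf{m} = (m_1,\dots,m_k) \in M^k$, write $(m_i)_j \in R/\mathfrak{b}_j$ for the $j$-th coordinate of $m_i$, and define $\det(\mathbf{m}) \in R/\mathfrak{b}$ to be the determinant of the $k\times k$ matrix over $R/\mathfrak{b}$ whose $(i,j)$-entry is the image of $(m_i)_j$ under the natural surjection $R/\mathfrak{b}_j \twoheadrightarrow R/\mathfrak{b}$. Then two rows $\mathbf{m},\mathbf{m}' \in \mathrm{Um}_k(M)$ are $\mathrm{E}_k(R)$-equivalent if and only if $\det(\mathbf{m}) = \det(\mathbf{m}')$.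
   Context: A ring $R$ is quasi-Euclidean if for every $n \ge 2$ and every $\mathbf{r} = (r_1,\dots,r_n) \in R^n$ there exist $E \in \mathrm{E}_n(R)$ and $d \in R$ with $(d,0,\dots,0) = \mathbf{r}E$. $\mathrm{E}_n(R)$ is the subgroup of $\mathrm{GL}_n(R)$ generated by the elementary matrices (matrices differing from the identity in a single off-diagonal entry). $\mathrm{Um}_k(M)$ is the set of $\mathbf{m}=(m_1,\dots,m_k)\in M^k$ whose components generate $M$. Matrices act by right multiplication $(\mathbf{m}A)_j = \sum_i m_i A_{ij}$, and $\mathbf{m},\mathbf{m}'$ are $\mathrm{E}_k(R)$-equivalent if $\mathbf{m}'=\mathbf{m}E$ for some $E\in\mathrm{E}_k(R)$. *)

theory Defs
  imports "Jordan_Normal_Form.Determinant"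
begin

definition is_ideal :: "'a::comm_ring_1 set \<Rightarrow> bool" where
  "is_ideal I \<longleftrightarrow> 0 \<in> I \<and> (\<forall>x\<in>I. \<forall>y\<in>I. x + y \<in> I) \<and> (\<forall>r. \<forall>x\<in>I. r * x \<in> I)"

definition proper_ideal :: "'a::comm_ring_1 set \<Rightarrow> bool" where
  "proper_ideal I \<longleftrightarrow> is_ideal I \<and> (1::'a) \<notin> I"

definition noetherian_ring :: "'a::comm_ring_1 itself \<Rightarrow> bool" where
  "noetherian_ring TYPE('a) \<longleftrightarrow>
     (\<forall>f :: nat \<Rightarrow> 'a set. (\<forall>n. is_ideal (f n)) \<and> (\<forall>n. f n \<subseteq> f (Suc n))
        \<longrightarrow> (\<exists>N. \<forall>n\<ge>N. f n = f N))"

definition ideal_sum :: "nat \<Rightarrow> (nat \<Rightarrow> 'a::comm_ring_1 set) \<Rightarrow> 'a set" where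
  "ideal_sum k b = {s. \<exists>x. (\<forall>j<k. x j \<in> b j) \<and> s = (\<Sum>j<k. x j)}"

definition elem_mat :: "nat \<Rightarrow> nat \<Rightarrow> nat \<Rightarrow> 'a::comm_ring_1 \<Rightarrow> 'a mat" where
  "elem_mat n i j c = mat n n (\<lambda>(a,b). if a = b then 1 else if a = i \<and> b = j then c else 0)"

definition is_elementary :: "nat \<Rightarrow> 'a::comm_ring_1 mat \<Rightarrow> bool" where
  "is_elementary n A \<longleftrightarrow> (\<exists>i j c. i < n \<and> j < n \<and> i \<noteq> j \<and> A = elem_mat n i j c)"

(* E_n(R): subgroup of GL_n(R) generated by elementary matrices.  Since the inverse of
   an elementary matrix is elementary, this is the monoid they generate. *)
inductive_set E_group :: "nat \<Rightarrow> 'a::comm_ring_1 mat set" for n where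
  one: "1\<^sub>m n \<in> E_group n"
| step: "A \<in> E_group n \<Longrightarrow> is_elementary n B \<Longrightarrow> A * B \<in> E_group n"

definition row_mult :: "'a::comm_ring_1 vec \<Rightarrow> 'a mat \<Rightarrow> 'a vec" where
  "row_mult r A = vec (dim_col A) (\<lambda>j. \<Sum>i<dim_vec r. r $ i * A $$ (i, j))"

definition quasi_euclidean :: "'a::comm_ring_1 itself \<Rightarrow> bool" where
  "quasi_euclidean TYPE('a) \<longleftrightarrow>
     (\<forall>n\<ge>2. \<forall>r :: 'a vec. r \<in> carrier_vec n \<longrightarrow>
        (\<exists>E \<in> E_group n. \<exists>d. row_mult r E = vec n (\<lambda>j. if j = 0 then d else 0)))"

(* Elements of M = R/b_0 x ... x R/b_(k-1) are represented by functions x :: nat => 'a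
   (coordinate j a representative in R of an element of R/b_j).  A k-tuple
   m = (m_0,...,m_(k-1)) in M^k is represented by a k x k matrix over R whose row i
   represents m_i, i.e. entry (i,j) represents (m_i)_j. *)

definition M_eq :: "nat \<Rightarrow> (nat \<Rightarrow> 'a::comm_ring_1 set) \<Rightarrow> (nat \<Rightarrow> 'a) \<Rightarrow> (nat \<Rightarrow> 'a) \<Rightarrow> bool" where
  "M_eq k b x y \<longleftrightarrow> (\<forall>j<k. x j - y j \<in> b j)"

definition Um :: "nat \<Rightarrow> (nat \<Rightarrow> 'a::comm_ring_1 set) \<Rightarrow> 'a mat \<Rightarrow> bool" where
  "Um k b m \<longleftrightarrow> m \<in> carrier_mat k k \<and>
     (\<forall>x :: nat \<Rightarrow> 'a. \<exists>r :: nat \<Rightarrow> 'a.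
        M_eq k b x (\<lambda>j. \<Sum>i<k. r i * m $$ (i, j)))"

definition E_equiv :: "nat \<Rightarrow> (nat \<Rightarrow> 'a::comm_ring_1 set) \<Rightarrow> 'a mat \<Rightarrow> 'a mat \<Rightarrow> bool" where
  "E_equiv k b m m' \<longleftrightarrow> (\<exists>E \<in> E_group k.
     \<forall>j<k. M_eq k b (\<lambda>c. m' $$ (j, c)) (\<lambda>c. \<Sum>i<k. E $$ (i, j) * m $$ (i, c)))"

(* det(m) in R/b: determinant over R/b of the reductions; computed as the determinant
   over R of representatives, equality taken modulo b = b_0 + ... + b_(k-1). *)
definition det_eq_mod :: "nat \<Rightarrow> (nat \<Rightarrow> 'a::comm_ring_1 set) \<Rightarrow> 'a mat \<Rightarrow> 'a mat \<Rightarrow> bool" where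
  "det_eq_mod k b m m' \<longleftrightarrow> det m - det m' \<in> ideal_sum k b"

end

theory Submission
  imports Defs
begin

text \<open>In a quasi-Euclidean ring the case \<open>n = 2\<close> of the definition yields, for any
  \<open>a, b\<close>, a common divisor \<open>d = u a + v b\<close>; a non-principal ideal would then contain a strictly
  ascending chain of principal ideals, so a Noetherian quasi-Euclidean ring is a principal ideal ring.
  Writing \<open>\<bb>\<^sub>j = (g\<^sub>j)\<close>, the determinant is well defined modulo \<open>(g\<^sub>1, \<dots>, g\<^sub>k)\<close> and unchanged by
  elementary matrices, which gives one direction. For the converse we induct on \<open>k\<close>. A unimodular
  change of two coordinates replaces \<open>g\<^sub>1, g\<^sub>c\<close> by their lcm and gcd, so we may assume that every
  \<open>g\<^sub>c\<close> divides \<open>g\<^sub>1\<close>. Elementary row operations then make the first column and, modulo the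
  \<open>g\<^sub>j\<close>, the first row equal to \<open>(1, 0, \<dots>, 0)\<close>, and the statement for the remaining
  \<open>(k-1) \<times> (k-1)\<close> minor over \<open>R/(g\<^sub>2) \<oplus> \<dots> \<oplus> R/(g\<^sub>k)\<close> is the induction hypothesis.\<close>

section \<open>Elementary matrices\<close>

lemma elem_mat_eq_addrow_mat: "i \<noteq> j \<Longrightarrow> elem_mat n i j c = addrow_mat n c i j"
  unfolding elem_mat_def addrow_mat_def by (intro eq_matI) auto

lemma elem_mat_carrier [simp]: "elem_mat n i j c \<in> carrier_mat n n"
  unfolding elem_mat_def by auto

lemma E_group_carrier: "E \<in> E_group n \<Longrightarrow> E \<in> carrier_mat n n"
  by (induction rule: E_group.induct) (auto simp: is_elementary_def)

lemma elementary_in_E_group: "is_elementary n B \<Longrightarrow> B \<in> E_group n"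
proof -
  assume B: "is_elementary n B"
  then have "B \<in> carrier_mat n n" by (auto simp: is_elementary_def)
  then show ?thesis using E_group.step[OF E_group.one B] by simp
qed

lemma addrow_mat_in_E_group: "i < n \<Longrightarrow> j < n \<Longrightarrow> i \<noteq> j \<Longrightarrow> addrow_mat n c i j \<in> E_group n"
proof -
  assume "i < n" "j < n" "i \<noteq> j"
  then have "elem_mat n i j c \<in> E_group n"
    by (intro elementary_in_E_group) (auto simp: is_elementary_def)
  then show ?thesis by (simp add: elem_mat_eq_addrow_mat[OF \<open>i \<noteq> j\<close>])
qed

lemma E_group_mult:
  assumes "A \<in> E_group n" and "B \<in> E_group n"
  shows "A * B \<in> E_group n"
  using assms(2)
proof (induction B rule: E_group.induct)
  case one
  show ?case using E_group_carrier[OF assms(1)] assms(1) by simp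
next
  case (step C D)
  have "A * (C * D) = (A * C) * D"
    using E_group_carrier[OF assms(1)] E_group_carrier[OF step.hyps(1)] step.hyps(2)
    unfolding is_elementary_def by (metis assoc_mult_mat elem_mat_carrier)
  then show ?case using step E_group.step by metis
qed

lemma E_group_inverse:
  assumes "E \<in> E_group n"
  obtains F where "F \<in> E_group n" "F * E = 1\<^sub>m n" "E * F = 1\<^sub>m n"
proof -
  have "\<exists>F\<in>E_group n. F * E = 1\<^sub>m n \<and> E * F = 1\<^sub>m n"
    using assms
  proof (induction rule: E_group.induct)
    case one
    then show ?case by (intro bexI[of _ "1\<^sub>m n"]) (auto intro: E_group.one)
  next
    case (step A B)
    then obtain F where F: "F \<in> E_group n" "F * A = 1\<^sub>m n" "A * F = 1\<^sub>m n" by auto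
    from step.hyps(2) obtain i j c where ij: "i < n" "j < n" "i \<noteq> j"
      and B: "B = addrow_mat n c i j"
      unfolding is_elementary_def using elem_mat_eq_addrow_mat by metis
    define G where "G = addrow_mat n (-c) i j"
    have G: "G \<in> E_group n" unfolding G_def using addrow_mat_in_E_group ij by auto
    have GB: "G * B = 1\<^sub>m n" unfolding G_def B using addrow_mat_inv[OF ij, of "-c"] by simp
    have BG: "B * G = 1\<^sub>m n" unfolding G_def B using addrow_mat_inv[OF ij, of c] by simp
    have cA: "A \<in> carrier_mat n n" "F \<in> carrier_mat n n" using E_group_carrier step.hyps F by auto
    have cB: "B \<in> carrier_mat n n" "G \<in> carrier_mat n n" unfolding B G_def by auto
    have "(G * F) * (A * B) = G * ((F * A) * B)"
      using cA cB by (simp add: assoc_mult_mat[of _ n n _ n _ n])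
    also have "\<dots> = 1\<^sub>m n" using F GB cB by simp
    finally have left: "(G * F) * (A * B) = 1\<^sub>m n" .
    have "(A * B) * (G * F) = A * ((B * G) * F)"
      using cA cB by (simp add: assoc_mult_mat[of _ n n _ n _ n])
    also have "\<dots> = 1\<^sub>m n" using F BG cA by simp
    finally have right: "(A * B) * (G * F) = 1\<^sub>m n" .
    show ?case using left right E_group_mult[OF G F(1)] by blast
  qed
  then show thesis using that by blast
qed

lemma E_group_transpose: "E \<in> E_group n \<Longrightarrow> transpose_mat E \<in> E_group n"
proof (induction rule: E_group.induct)
  case one
  then show ?case by (simp add: E_group.one)
next
  case (step A B)
  from step.hyps(2) obtain i j c where ij: "i < n" "j < n" "i \<noteq> j" and B: "B = elem_mat n i j c"
    unfolding is_elementary_def by metis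
  have "transpose_mat B = elem_mat n j i c" unfolding B elem_mat_def by (intro eq_matI) auto
  then have tB: "transpose_mat B \<in> E_group n"
    using elementary_in_E_group ij unfolding is_elementary_def by metis
  have "transpose_mat (A * B) = transpose_mat B * transpose_mat A"
    using transpose_mult[of A n n B n] E_group_carrier[OF step.hyps(1)] B by simp
  then show ?case using E_group_mult[OF tB step.IH] by simp
qed

lemma det_E_group: "E \<in> E_group n \<Longrightarrow> det E = 1"
proof (induction rule: E_group.induct)
  case one
  then show ?case by simp
next
  case (step A B)
  from step.hyps(2) obtain i j c where ij: "i < n" "j < n" "i \<noteq> j" and B: "B = addrow_mat n c i j"
    unfolding is_elementary_def using elem_mat_eq_addrow_mat by metis
  show ?case
    using det_mult[OF E_group_carrier[OF step.hyps(1)], of B] det_addrow_mat[OF ij(3)] step.IH B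
    by simp
qed

lemma index_mult_mat_sum:
  "X \<in> carrier_mat k n \<Longrightarrow> Y \<in> carrier_mat n m \<Longrightarrow> i < k \<Longrightarrow> j < m \<Longrightarrow>
   (X * Y) $$ (i,j) = (\<Sum>l<n. X $$ (i,l) * Y $$ (l,j))"
  by (auto simp: scalar_prod_def atLeast0LessThan intro!: sum.cong)

definition row_comb :: "nat \<Rightarrow> (nat \<Rightarrow> 'a::comm_ring_1) \<Rightarrow> 'a mat \<Rightarrow> nat \<Rightarrow> 'a" where
  "row_comb k r A j = (\<Sum>i<k. r i * A $$ (i,j))"

lemma row_comb_mult:
  assumes F: "F \<in> carrier_mat k k" and Y: "Y \<in> carrier_mat k k" and j: "j < k"
  shows "row_comb k (row_comb k r F) Y j = row_comb k r (F * Y) j"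
proof -
  have "row_comb k (row_comb k r F) Y j = (\<Sum>l<k. \<Sum>i<k. r i * (F $$ (i,l) * Y $$ (l,j)))"
    unfolding row_comb_def by (simp add: sum_distrib_right mult.assoc)
  also have "\<dots> = (\<Sum>i<k. r i * (\<Sum>l<k. F $$ (i,l) * Y $$ (l,j)))"
    by (subst sum.swap) (simp add: sum_distrib_left)
  also have "\<dots> = row_comb k r (F * Y) j"
    unfolding row_comb_def using index_mult_mat_sum[OF F Y _ j] by simp
  finally show ?thesis .
qed

lemma row_comb_one: "j < k \<Longrightarrow> row_comb k r (1\<^sub>m k) j = r j"
proof -
  assume j: "j < k"
  have "row_comb k r (1\<^sub>m k) j = (\<Sum>i<k. if i = j then r j else 0)"
    unfolding row_comb_def using j by (intro sum.cong) auto
  then show ?thesis using j by simp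
qed

lemma row_comb_diff: "row_comb k x A j - row_comb k y A j = row_comb k (\<lambda>i. x i - y i) A j"
  unfolding row_comb_def by (simp add: sum_subtractf left_diff_distrib)

lemma index_mult_mat_row_comb:
  "X \<in> carrier_mat k k \<Longrightarrow> Y \<in> carrier_mat k k \<Longrightarrow> i < k \<Longrightarrow> j < k \<Longrightarrow>
   (X * Y) $$ (i,j) = row_comb k (\<lambda>l. X $$ (i,l)) Y j"
  unfolding row_comb_def by (rule index_mult_mat_sum)

section \<open>Ideals and determinants\<close>

definition gen_ideal :: "nat \<Rightarrow> (nat \<Rightarrow> 'a::comm_ring_1) \<Rightarrow> 'a set" where
  "gen_ideal k g = {x. \<exists>s. x = (\<Sum>c<k. s c * g c)}"

lemma is_ideal_gen_ideal: "is_ideal (gen_ideal k g)"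
  unfolding is_ideal_def
proof (intro conjI ballI allI)
  show "0 \<in> gen_ideal k g"
    unfolding gen_ideal_def by (auto intro!: exI[of _ "\<lambda>_. 0"])
next
  fix x y assume "x \<in> gen_ideal k g" "y \<in> gen_ideal k g"
  then obtain s t where "x = (\<Sum>c<k. s c * g c)" "y = (\<Sum>c<k. t c * g c)"
    unfolding gen_ideal_def by blast
  then have "x + y = (\<Sum>c<k. (s c + t c) * g c)" by (simp add: sum.distrib distrib_right)
  then show "x + y \<in> gen_ideal k g"
    unfolding gen_ideal_def by (auto intro!: exI[of _ "\<lambda>c. s c + t c"])
next
  fix r x assume "x \<in> gen_ideal k g"
  then obtain s where "x = (\<Sum>c<k. s c * g c)" unfolding gen_ideal_def by blast
  then have "r * x = (\<Sum>c<k. (r * s c) * g c)" by (simp add: sum_distrib_left mult.assoc)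
  then show "r * x \<in> gen_ideal k g"
    unfolding gen_ideal_def by (auto intro!: exI[of _ "\<lambda>c. r * s c"])
qed

lemma ideal_add: "is_ideal I \<Longrightarrow> x \<in> I \<Longrightarrow> y \<in> I \<Longrightarrow> x + y \<in> I"
  unfolding is_ideal_def by blast

lemma ideal_mult: "is_ideal I \<Longrightarrow> x \<in> I \<Longrightarrow> r * x \<in> I"
  unfolding is_ideal_def by blast

lemma ideal_diff: "is_ideal I \<Longrightarrow> x \<in> I \<Longrightarrow> y \<in> I \<Longrightarrow> x - y \<in> I"
  using ideal_add[of I x "(-1) * y"] ideal_mult[of I y "-1"] by simp

lemma ideal_sum_closed:
  assumes "is_ideal I" and "finite S" and "\<And>p. p \<in> S \<Longrightarrow> f p \<in> I"
  shows "(\<Sum>p\<in>S. f p) \<in> I"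
  using assms(2,3) by (induction S rule: finite_induct) (use assms(1) in \<open>auto simp: is_ideal_def\<close>)

lemma ideal_prod_diff:
  assumes I: "is_ideal I" and "finite S" and "\<And>i. i \<in> S \<Longrightarrow> a i - b i \<in> I"
  shows "(\<Prod>i\<in>S. a i) - (\<Prod>i\<in>S. b i) \<in> I"
  using assms(2,3)
proof (induction S rule: finite_induct)
  case empty
  then show ?case using I by (simp add: is_ideal_def)
next
  case (insert x S)
  have "(\<Prod>i\<in>insert x S. a i) - (\<Prod>i\<in>insert x S. b i) =
        a x * ((\<Prod>i\<in>S. a i) - (\<Prod>i\<in>S. b i)) + (\<Prod>i\<in>S. b i) * (a x - b x)"
    using insert.hyps by (simp add: algebra_simps)
  moreover have "a x * ((\<Prod>i\<in>S. a i) - (\<Prod>i\<in>S. b i)) \<in> I"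
    and "(\<Prod>i\<in>S. b i) * (a x - b x) \<in> I"
    using insert I by (simp_all add: ideal_mult)
  ultimately show ?case using ideal_add[OF I] by simp
qed

lemma det_diff_in_ideal:
  assumes I: "is_ideal I" and X: "X \<in> carrier_mat k k" and Y: "Y \<in> carrier_mat k k"
    and XY: "\<And>i j. i < k \<Longrightarrow> j < k \<Longrightarrow> X $$ (i,j) - Y $$ (i,j) \<in> I"
  shows "det X - det Y \<in> I"
proof -
  let ?P = "{p. p permutes {0..<k}}"
  have "det X - det Y = (\<Sum>p\<in>?P. signof p *
      ((\<Prod>i = 0..<k. X $$ (i, p i)) - (\<Prod>i = 0..<k. Y $$ (i, p i))))"
    unfolding det_def'[OF X] det_def'[OF Y] by (simp add: sum_subtractf right_diff_distrib)
  also have "\<dots> \<in> I"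
  proof (rule ideal_sum_closed[OF I])
    fix p assume "p \<in> ?P"
    then have "p i < k" if "i < k" for i using that by (auto dest: permutes_in_image)
    then have "(\<Prod>i = 0..<k. X $$ (i, p i)) - (\<Prod>i = 0..<k. Y $$ (i, p i)) \<in> I"
      by (intro ideal_prod_diff[OF I]) (auto intro: XY)
    then show "signof p * ((\<Prod>i = 0..<k. X $$ (i, p i)) - (\<Prod>i = 0..<k. Y $$ (i, p i))) \<in> I"
      by (rule ideal_mult[OF I])
  qed (simp add: finite_permutations)
  finally show ?thesis .
qed

lemma gen_ideal_dvd_generator: "c < k \<Longrightarrow> g c dvd x \<Longrightarrow> x \<in> gen_ideal k g"
proof -
  assume c: "c < k" and "g c dvd x"
  then obtain w where x: "x = w * g c" by (metis dvd_def mult.commute)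
  have "(\<Sum>j<k. (if j = c then w else 0) * g j) = (\<Sum>j<k. if j = c then w * g c else 0)"
    by (intro sum.cong) auto
  also have "\<dots> = w * g c" using c by simp
  finally have "(\<Sum>j<k. (if j = c then w else 0) * g j) = w * g c" .
  then show ?thesis
    unfolding gen_ideal_def x by (intro CollectI exI[of _ "\<lambda>j. if j = c then w else 0"]) simp
qed

lemma gen_ideal_mono:
  assumes "\<And>j. j < k \<Longrightarrow> g j \<in> gen_ideal k h" and "x \<in> gen_ideal k g"
  shows "x \<in> gen_ideal k h"
proof -
  obtain s where "x = (\<Sum>j<k. s j * g j)" using assms(2) unfolding gen_ideal_def by blast
  moreover have "(\<Sum>j<k. s j * g j) \<in> gen_ideal k h"
    using assms(1) by (intro ideal_sum_closed is_ideal_gen_ideal ideal_mult) auto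
  ultimately show ?thesis by simp
qed

lemma gen_ideal_Suc_shift:
  assumes "x \<in> gen_ideal (Suc m) g" "0 < m" "g 1 dvd g 0"
  shows "x \<in> gen_ideal m (\<lambda>c. g (Suc c))"
proof -
  obtain s where "x = (\<Sum>c<Suc m. s c * g c)" using assms(1) unfolding gen_ideal_def by blast
  then have "x = s 0 * g 0 + (\<Sum>c<m. s (Suc c) * g (Suc c))"
    using sum.lessThan_Suc_shift[of "\<lambda>c. s c * g c" m] by simp
  moreover have "s 0 * g 0 \<in> gen_ideal m (\<lambda>c. g (Suc c))"
    using assms(2,3) by (intro gen_ideal_dvd_generator[of 0]) auto
  moreover have "(\<Sum>c<m. s (Suc c) * g (Suc c)) \<in> gen_ideal m (\<lambda>c. g (Suc c))"
    unfolding gen_ideal_def by (auto intro!: exI[of _ "\<lambda>c. s (Suc c)"])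
  ultimately show ?thesis by (auto intro: ideal_add[OF is_ideal_gen_ideal])
qed

section \<open>Matrices representing elements of \<open>(\<oplus>\<^sub>j R/(g\<^sub>j))\<^sup>k\<close>\<close>

text \<open>For generators \<open>g\<^sub>0, \<dots>, g\<^sub>k\<^sub>-\<^sub>1\<close> a \<open>k \<times> k\<close> matrix over \<open>R\<close> represents an element of \<open>M\<^sup>k\<close>,
  \<open>M = \<oplus>\<^sub>j R/(g\<^sub>j)\<close>: row \<open>i\<close> is \<open>m\<^sub>i\<close>, read modulo \<open>g\<^sub>j\<close> in column \<open>j\<close>. Thus \<open>col_cong\<close> is
  equality in \<open>M\<^sup>k\<close>, and \<open>rows_span\<close> says that \<open>m\<^sub>0, \<dots>, m\<^sub>k\<^sub>-\<^sub>1\<close> generate \<open>M\<close>.\<close>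

definition col_cong :: "nat \<Rightarrow> (nat \<Rightarrow> 'a::comm_ring_1) \<Rightarrow> 'a mat \<Rightarrow> 'a mat \<Rightarrow> bool" where
  "col_cong k g X Y \<longleftrightarrow> (\<forall>i<k. \<forall>j<k. g j dvd X $$ (i,j) - Y $$ (i,j))"

definition rows_span :: "nat \<Rightarrow> (nat \<Rightarrow> 'a::comm_ring_1) \<Rightarrow> 'a mat \<Rightarrow> bool" where
  "rows_span k g A \<longleftrightarrow> (\<forall>x. \<exists>r. \<forall>j<k. g j dvd x j - row_comb k r A j)"

lemma rows_spanD:
  assumes "rows_span k g A"
  obtains r where "\<And>j. j < k \<Longrightarrow> g j dvd x j - row_comb k r A j"
  using assms unfolding rows_span_def by blast

lemma dvd_diff_swap: "a dvd b - c \<longleftrightarrow> a dvd c - (b::'a::comm_ring_1)"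
  by (metis dvd_minus_iff minus_diff_eq)

lemma col_cong_sym: "col_cong k g X Y \<Longrightarrow> col_cong k g Y X"
  unfolding col_cong_def by (simp add: dvd_diff_swap)

lemma col_cong_trans: "col_cong k g X Y \<Longrightarrow> col_cong k g Y Z \<Longrightarrow> col_cong k g X Z"
  unfolding col_cong_def by (metis (no_types) diff_add_cancel add_diff_eq dvd_add)

lemma col_cong_mult_left:
  assumes F: "F \<in> carrier_mat k k" and X: "X \<in> carrier_mat k k" and Y: "Y \<in> carrier_mat k k"
    and XY: "col_cong k g X Y"
  shows "col_cong k g (F * X) (F * Y)"
  unfolding col_cong_def
proof (intro allI impI)
  fix i j assume ij: "i < k" "j < k"
  have "(F * X) $$ (i,j) - (F * Y) $$ (i,j) = (\<Sum>l<k. F $$ (i,l) * (X $$ (l,j) - Y $$ (l,j)))"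
    using index_mult_mat_sum[OF F X ij] index_mult_mat_sum[OF F Y ij]
    by (simp add: sum_subtractf right_diff_distrib del: index_mult_mat)
  also have "g j dvd \<dots>" using XY ij unfolding col_cong_def by (auto intro!: dvd_sum dvd_mult)
  finally show "g j dvd (F * X) $$ (i,j) - (F * Y) $$ (i,j)" .
qed

lemma rows_span_col_cong:
  assumes "col_cong k g X Y" and "rows_span k g X"
  shows "rows_span k g Y"
  unfolding rows_span_def
proof
  fix x
  obtain r where r: "\<And>j. j < k \<Longrightarrow> g j dvd x j - row_comb k r X j"
    using assms(2) unfolding rows_span_def by blast
  have "g j dvd x j - row_comb k r Y j" if j: "j < k" for j
  proof -
    have "x j - row_comb k r Y j = (x j - row_comb k r X j) + (\<Sum>i<k. r i * (X $$ (i,j) - Y $$ (i,j)))"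
      unfolding row_comb_def by (simp add: sum_subtractf right_diff_distrib)
    also have "g j dvd \<dots>"
      using r[OF j] assms(1) j unfolding col_cong_def by (auto intro!: dvd_add dvd_sum dvd_mult)
    finally show ?thesis .
  qed
  then show "\<exists>r. \<forall>j<k. g j dvd x j - row_comb k r Y j" by blast
qed

lemma rows_span_mult_left:
  assumes E: "E \<in> carrier_mat k k" and F: "F \<in> carrier_mat k k" and FE: "F * E = 1\<^sub>m k"
    and X: "X \<in> carrier_mat k k" and U: "rows_span k g X"
  shows "rows_span k g (E * X)"
  unfolding rows_span_def
proof
  fix x
  obtain r where r: "\<forall>j<k. g j dvd x j - row_comb k r X j"
    using U unfolding rows_span_def by blast
  have "F * (E * X) = X" using E F X FE by (simp add: assoc_mult_mat[symmetric, of F k k E k X k])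
  then have "row_comb k (row_comb k r F) (E * X) j = row_comb k r X j" if "j < k" for j
    using row_comb_mult[OF F _ that, of "E * X" r] E X by simp
  then show "\<exists>r. \<forall>j<k. g j dvd x j - row_comb k r (E * X) j"
    using r by (intro exI[of _ "row_comb k r F"]) simp
qed

lemma det_col_cong:
  assumes "X \<in> carrier_mat k k" and "Y \<in> carrier_mat k k" and "col_cong k g X Y"
  shows "det X - det Y \<in> gen_ideal k g"
  using assms by (intro det_diff_in_ideal[OF is_ideal_gen_ideal])
    (auto simp: col_cong_def intro: gen_ideal_dvd_generator)

definition det_classifies :: "nat \<Rightarrow> (nat \<Rightarrow> 'a::comm_ring_1) \<Rightarrow> bool" where
  "det_classifies k g \<longleftrightarrow> (\<forall>A\<in>carrier_mat k k. \<forall>B\<in>carrier_mat k k.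
     rows_span k g A \<longrightarrow> rows_span k g B \<longrightarrow> det A - det B \<in> gen_ideal k g \<longrightarrow>
     (\<exists>E\<in>E_group k. col_cong k g (E * A) B))"

lemma det_classifies_le_1: "k \<le> 1 \<Longrightarrow> det_classifies k g"
proof (cases k)
  case 0
  then show ?thesis unfolding det_classifies_def col_cong_def by (auto intro: E_group.one)
next
  case (Suc m)
  assume "k \<le> 1"
  with Suc have k: "k = 1" by simp
  show ?thesis
    unfolding det_classifies_def k
  proof (intro ballI impI)
    fix A B :: "'a mat"
    assume A: "A \<in> carrier_mat 1 1" and B: "B \<in> carrier_mat 1 1"
      and "det A - det B \<in> gen_ideal 1 g"
    then have "g 0 dvd A $$ (0,0) - B $$ (0,0)"
      unfolding gen_ideal_def det_single[OF A] det_single[OF B] by auto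
    then have "col_cong 1 g (1\<^sub>m 1 * A) B" using A unfolding col_cong_def by simp
    then show "\<exists>E\<in>E_group 1. col_cong 1 g (E * A) B" using E_group.one by blast
  qed
qed

section \<open>Noetherian quasi-Euclidean rings are principal ideal rings\<close>

lemma quasi_euclidean_bezout:
  fixes a b :: "'a::comm_ring_1"
  assumes "quasi_euclidean TYPE('a)"
  obtains d a' b' s t where "a = d * a'" "b = d * b'" "s * a' + t * b' = 1"
proof -
  define \<rho> where "\<rho> = (\<lambda>i::nat. if i = 0 then a else b)"
  have sum2: "\<And>f. (\<Sum>i<2::nat. f i) = f 0 + f 1" by (simp add: numeral_2_eq_2)
  have "vec 2 \<rho> \<in> carrier_vec 2" by simp
  then obtain E d where E: "E \<in> E_group 2"
    and rE: "row_mult (vec 2 \<rho>) E = vec 2 (\<lambda>j. if j = 0 then d else 0)"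
    using assms unfolding quasi_euclidean_def by fastforce
  obtain F where F: "F \<in> E_group 2" "F * E = 1\<^sub>m 2" "E * F = 1\<^sub>m 2"
    using E_group_inverse[OF E] by blast
  have cE: "E \<in> carrier_mat 2 2" and cF: "F \<in> carrier_mat 2 2"
    using E_group_carrier E F(1) by blast+
  have \<rho>E: "row_comb 2 \<rho> E j = (if j = 0 then d else 0)" if "j < 2" for j
    using arg_cong[OF rE, of "\<lambda>v. v $ j"] that cE
    by (simp add: row_mult_def row_comb_def sum2 \<rho>_def)
  \<comment> \<open>\<open>(a, b) = (d, 0) F\<close> as \<open>E F = 1\<close>; the entry \<open>(0,0)\<close> of \<open>F E = 1\<close> is a Bezout identity\<close>
  have "\<rho> j = d * F $$ (0,j)" if j: "j < 2" for j
  proof -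
    have "\<rho> j = row_comb 2 (row_comb 2 \<rho> E) F j"
      using row_comb_mult[OF cE cF j, of \<rho>] row_comb_one[OF j, of \<rho>] F(3) by simp
    also have "\<dots> = d * F $$ (0,j)"
      unfolding row_comb_def[of 2 "row_comb 2 \<rho> E"] using \<rho>E by (simp add: sum2)
    finally show ?thesis .
  qed
  from this[of 0] this[of 1] have "a = d * F $$ (0,0)" "b = d * F $$ (0,1)"
    by (simp_all add: \<rho>_def)
  moreover have "E $$ (0,0) * F $$ (0,0) + E $$ (1,0) * F $$ (0,1) = 1"
    using index_mult_mat_sum[OF cF cE, of 0 0] F(2) by (simp add: sum2 mult.commute)
  ultimately show thesis by (rule that[of d "F $$ (0,0)" "F $$ (0,1)" "E $$ (0,0)" "E $$ (1,0)"])
qed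

lemma quasi_euclidean_gcd_comb:
  fixes a b :: "'a::comm_ring_1"
  assumes "quasi_euclidean TYPE('a)"
  obtains d u v where "d dvd a" "d dvd b" "d = u * a + v * b"
proof -
  obtain d a' b' s t where ab: "a = d * a'" "b = d * b'" and st: "s * a' + t * b' = (1::'a)"
    using quasi_euclidean_bezout[OF assms] by blast
  have "s * a + t * b = d * (s * a' + t * b')" unfolding ab by (simp add: algebra_simps)
  then have "d = s * a + t * b" using st by simp
  moreover have "d dvd a" "d dvd b" using ab by simp_all
  ultimately show thesis using that by blast
qed

lemma non_principal_ideal_strict_divisor:
  fixes I :: "'a::comm_ring_1 set"
  assumes QE: "quasi_euclidean TYPE('a)"
    and I: "is_ideal I" and np: "\<forall>h. I \<noteq> {x. h dvd x}" and g: "g \<in> I"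
  obtains d where "d \<in> I" "d dvd g" "\<not> g dvd d"
proof -
  have "{x. g dvd x} \<subseteq> I"
  proof
    fix x assume "x \<in> {x. g dvd x}"
    then obtain w where "x = g * w" unfolding dvd_def by blast
    then show "x \<in> I" using ideal_mult[OF I g, of w] by (simp add: mult.commute)
  qed
  then have "\<not> I \<subseteq> {x. g dvd x}" using np subset_antisym by metis
  then obtain y where y: "y \<in> I" "\<not> g dvd y" by auto
  obtain d u v where d: "d dvd g" "d dvd y" "d = u * g + v * y"
    by (rule quasi_euclidean_gcd_comb[OF QE, of g y])
  have "d \<in> I" unfolding d(3) using I g y by (intro ideal_add ideal_mult)
  moreover have "\<not> g dvd d" using d(2) y(2) by (meson dvd_trans)
  ultimately show thesis using d(1) that by blast
qed

lemma noetherian_quasi_euclidean_principal: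
  assumes N: "noetherian_ring TYPE('a::comm_ring_1)" and QE: "quasi_euclidean TYPE('a)"
    and I: "is_ideal (I :: 'a set)"
  shows "\<exists>g. I = {x. g dvd x}"
proof (rule ccontr)
  assume "\<nexists>g. I = {x. g dvd x}"
  then have np: "\<forall>h. I \<noteq> {x. h dvd x}" by blast
  define next_div where "next_div g = (SOME d. d \<in> I \<and> d dvd g \<and> \<not> g dvd d)" for g
  have nd: "next_div g \<in> I \<and> next_div g dvd g \<and> \<not> g dvd next_div g" if "g \<in> I" for g
    unfolding next_div_def
    by (rule someI_ex, rule non_principal_ideal_strict_divisor[OF QE I np that]) blast
  define seq where "seq n = (next_div ^^ n) 0" for n
  have seq_Suc: "seq (Suc n) = next_div (seq n)" for n unfolding seq_def by simp
  have seq_in: "seq n \<in> I" for n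
  proof (induction n)
    case 0
    show ?case using I unfolding seq_def is_ideal_def by simp
  next
    case (Suc n)
    show ?case unfolding seq_Suc using nd[OF Suc.IH] by blast
  qed
  define C where "C n = {x. seq n dvd x}" for n
  have "(\<forall>n. is_ideal (C n)) \<and> (\<forall>n. C n \<subseteq> C (Suc n))"
  proof (intro conjI allI)
    show "is_ideal (C n)" for n unfolding C_def is_ideal_def by (auto intro: dvd_add dvd_mult)
    show "C n \<subseteq> C (Suc n)" for n
      unfolding C_def seq_Suc using nd[OF seq_in[of n]] dvd_trans by blast
  qed
  then obtain M where M: "\<forall>n\<ge>M. C n = C M"
    using N[unfolded noetherian_ring_def, rule_format] by blast
  have "seq (Suc M) \<in> C (Suc M)" by (simp add: C_def)
  also have "C (Suc M) = C M" using M[rule_format, of "Suc M"] by simp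
  finally have "seq M dvd seq (Suc M)" by (simp add: C_def)
  then show False using nd[OF seq_in[of M]] unfolding seq_Suc by blast
qed

section \<open>Reduction to a minor\<close>

definition lift_mat :: "'a::comm_ring_1 mat \<Rightarrow> 'a mat" where
  "lift_mat X = four_block_mat (1\<^sub>m 1) (0\<^sub>m 1 (dim_col X)) (0\<^sub>m (dim_row X) 1) X"

lemma lift_mat_carrier: "X \<in> carrier_mat m m \<Longrightarrow> lift_mat X \<in> carrier_mat (Suc m) (Suc m)"
  unfolding lift_mat_def carrier_mat_def by simp

lemma lift_mat_index:
  assumes "X \<in> carrier_mat m m" and "i < Suc m" and "j < Suc m"
  shows "lift_mat X $$ (i,j) =
    (if i = 0 then (if j = 0 then 1 else 0) else if j = 0 then 0 else X $$ (i - 1, j - 1))"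
  using assms unfolding lift_mat_def by auto

lemma lift_mat_mult:
  assumes X: "X \<in> carrier_mat m m" and Y: "Y \<in> carrier_mat m m"
  shows "lift_mat X * lift_mat Y = lift_mat (X * Y)"
proof (rule eq_matI)
  have XY: "X * Y \<in> carrier_mat m m" using X Y by simp
  fix i j assume "i < dim_row (lift_mat (X * Y))" and "j < dim_col (lift_mat (X * Y))"
  then have i: "i < Suc m" and j: "j < Suc m" using lift_mat_carrier[OF XY] by auto
  have "(lift_mat X * lift_mat Y) $$ (i,j) = (\<Sum>l<Suc m. lift_mat X $$ (i,l) * lift_mat Y $$ (l,j))"
    by (rule index_mult_mat_sum[OF lift_mat_carrier[OF X] lift_mat_carrier[OF Y] i j])
  also have "\<dots> = lift_mat X $$ (i,0) * lift_mat Y $$ (0,j)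
      + (\<Sum>l<m. lift_mat X $$ (i,Suc l) * lift_mat Y $$ (Suc l,j))"
    by (rule sum.lessThan_Suc_shift)
  also have "\<dots> = lift_mat (X * Y) $$ (i,j)"
  proof (cases "i = 0 \<or> j = 0")
    case True
    then show ?thesis using i j
      by (auto simp: lift_mat_index[OF X] lift_mat_index[OF Y] lift_mat_index[OF XY])
  next
    case False
    then obtain i' j' where ij: "i = Suc i'" "j = Suc j'" "i' < m" "j' < m"
      using i j by (cases i; cases j) auto
    then show ?thesis
      using index_mult_mat_sum[OF X Y ij(3,4)]
    by (simp add: lift_mat_index[OF X] lift_mat_index[OF Y] lift_mat_index[OF XY])
  qed
  finally show "(lift_mat X * lift_mat Y) $$ (i,j) = lift_mat (X * Y) $$ (i,j)" .
qed (use lift_mat_carrier[OF X] lift_mat_carrier[OF Y] lift_mat_carrier[OF mult_carrier_mat[OF X Y]]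
     in auto)

lemma lift_mat_E_group: "E \<in> E_group m \<Longrightarrow> lift_mat E \<in> E_group (Suc m)"
proof (induction rule: E_group.induct)
  case one
  have "lift_mat (1\<^sub>m m) = 1\<^sub>m (Suc m)"
    by (rule eq_matI) (auto simp: lift_mat_index[OF one_carrier_mat] lift_mat_def)
  then show ?case using E_group.one by metis
next
  case (step A B)
  from step.hyps(2) obtain i j c where ij: "i < m" "j < m" "i \<noteq> j" and B: "B = elem_mat m i j c"
    unfolding is_elementary_def by metis
  have "lift_mat B = elem_mat (Suc m) (Suc i) (Suc j) c"
    unfolding B by (rule eq_matI) (auto simp: lift_mat_index[OF elem_mat_carrier] lift_mat_def
      elem_mat_def)
  then have "is_elementary (Suc m) (lift_mat B)" unfolding is_elementary_def using ij by auto
  moreover have "lift_mat (A * B) = lift_mat A * lift_mat B"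
    using lift_mat_mult[OF E_group_carrier[OF step.hyps(1)], of B] B by simp
  ultimately show ?case using E_group.step[OF step.IH] by simp
qed

lemma det_lift_mat:
  assumes X: "X \<in> carrier_mat m m"
  shows "det (lift_mat X) = det X"
proof -
  have "lift_mat X = four_block_mat (1\<^sub>m 1) (0\<^sub>m 1 m) (0\<^sub>m m 1) X"
    using X unfolding lift_mat_def by auto
  then show ?thesis using det_four_block_mat_lower_left_zero_col[where n = m, OF _ _ refl X] by simp
qed

lemma col_cong_lift_mat:
  assumes X: "X \<in> carrier_mat m m" and Y: "Y \<in> carrier_mat m m"
    and XY: "col_cong m (\<lambda>j. g (Suc j)) X Y"
  shows "col_cong (Suc m) g (lift_mat X) (lift_mat Y)"
  unfolding col_cong_def
proof (intro allI impI)
  fix i j assume i: "i < Suc m" and j: "j < Suc m"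
  show "g j dvd lift_mat X $$ (i,j) - lift_mat Y $$ (i,j)"
  proof (cases "i = 0 \<or> j = 0")
    case True
    then show ?thesis using i j by (auto simp: lift_mat_index[OF X] lift_mat_index[OF Y])
  next
    case False
    then obtain i' j' where "i = Suc i'" "j = Suc j'" "i' < m" "j' < m"
      using i j by (cases i; cases j) auto
    then show ?thesis
      using XY unfolding col_cong_def by (simp add: lift_mat_index[OF X] lift_mat_index[OF Y])
  qed
qed

lemma mat_delete_0_0_index:
  "A \<in> carrier_mat (Suc m) (Suc m) \<Longrightarrow> i < m \<Longrightarrow> j < m \<Longrightarrow> mat_delete A 0 0 $$ (i,j) = A $$ (Suc i, Suc j)"
  unfolding mat_delete_def insert_index_def by simp

lemma mat_delete_0_0_carrier: "A \<in> carrier_mat (Suc m) (Suc m) \<Longrightarrow> mat_delete A 0 0 \<in> carrier_mat m m"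
  using mat_delete_carrier[of A "Suc m" "Suc m" 0 0] by simp

lemma E_group_first_col_gcd:
  assumes QE: "quasi_euclidean TYPE('a::comm_ring_1)" and k: "2 \<le> k"
    and A: "(A :: 'a mat) \<in> carrier_mat k k"
  obtains T d where "T \<in> E_group k" "\<And>i. i < k \<Longrightarrow> (T * A) $$ (i,0) = (if i = 0 then d else 0)"
proof -
  have "col A 0 \<in> carrier_vec k" using A unfolding carrier_mat_def carrier_vec_def by simp
  then obtain E d where E: "E \<in> E_group k"
    and rE: "row_mult (col A 0) E = vec k (\<lambda>j. if j = 0 then d else 0)"
    using QE[unfolded quasi_euclidean_def, rule_format, OF k] by blast
  have cE: "E \<in> carrier_mat k k" by (rule E_group_carrier[OF E])
  have col: "(transpose_mat E * A) $$ (i,0) = (if i = 0 then d else 0)" if i: "i < k" for i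
  proof -
    have "(transpose_mat E * A) $$ (i,0) = (\<Sum>l<k. transpose_mat E $$ (i,l) * A $$ (l,0))"
      by (rule index_mult_mat_sum[of _ k k A k]) (use cE A i k in simp_all)
    also have "\<dots> = (\<Sum>l<k. col A 0 $ l * E $$ (l,i))"
      by (rule sum.cong) (use A cE i k in \<open>simp_all add: mult.commute\<close>)
    also have "\<dots> = row_mult (col A 0) E $ i" using cE A i by (simp add: row_mult_def)
    also have "\<dots> = (if i = 0 then d else 0)" using rE i by simp
    finally show ?thesis .
  qed
  show thesis by (rule that[OF E_group_transpose[OF E] col])
qed

lemma E_group_first_col_to_unit:
  assumes k: "2 \<le> k" and A: "A \<in> carrier_mat k k"
    and col: "\<And>i. i < k \<Longrightarrow> A $$ (i,0) = (if i = 0 then d else if i = 1 then 1 - u * d else 0)"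
  shows "\<exists>P\<in>E_group k. \<forall>i<k. (P * A) $$ (i,0) = (if i = 0 then 1 else 0)"
proof -
  define P where "P = addrow_mat k (-1) 1 0 * (addrow_mat k (1 - d) 0 1 * addrow_mat k u 1 0)"
  have P: "P \<in> E_group k" unfolding P_def using k by (intro E_group_mult addrow_mat_in_E_group) auto
  have k01: "0 < k" "1 < k" using k by auto
  have PA: "P * A = addrow (-1) 1 0 (addrow (1 - d) 0 1 (addrow u 1 0 A))"
  proof -
    have c1: "addrow u 1 0 A \<in> carrier_mat k k"
      and c2: "addrow (1 - d) 0 1 (addrow u 1 0 A) \<in> carrier_mat k k"
      using A by auto
    have "addrow (-1) 1 0 (addrow (1 - d) 0 1 (addrow u 1 0 A))
        = addrow_mat k (-1) 1 0 * (addrow_mat k (1 - d) 0 1 * (addrow_mat k u 1 0 * A))"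
      using addrow_mat[OF A k01(1)] addrow_mat[OF c1 k01(2)] addrow_mat[OF c2 k01(1)] by simp
    also have "\<dots> = P * A"
    proof -
      have "addrow_mat k (1 - d) 0 1 * addrow_mat k u 1 0 \<in> carrier_mat k k"
        by (rule mult_carrier_mat[OF addrow_mat_carrier addrow_mat_carrier])
      then show ?thesis
        unfolding P_def using assoc_mult_mat[OF addrow_mat_carrier _ A]
          assoc_mult_mat[OF addrow_mat_carrier addrow_mat_carrier A] by simp
    qed
    finally show ?thesis by simp
  qed
  have "(P * A) $$ (i,0) = (if i = 0 then 1 else 0)" if "i < k" for i
    unfolding PA using that k01 A col[of 0] col[of 1] col[OF that] by (auto simp: algebra_simps)
  then show ?thesis using P by blast
qed

lemma E_group_first_col_unit_mod:
  assumes k: "2 \<le> k" and A: "A \<in> carrier_mat k k"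
    and col: "\<And>i. i < k \<Longrightarrow> A $$ (i,0) = (if i = 0 then d else 0)"
    and u: "g 0 dvd 1 - u * d"
  obtains P A1 where "P \<in> E_group k" "A1 \<in> carrier_mat k k" "col_cong k g (P * A) A1"
    "\<And>i. i < k \<Longrightarrow> A1 $$ (i,0) = (if i = 0 then 1 else 0)"
proof -
  define A' where "A' = mat k k (\<lambda>(i,j). if i = 1 \<and> j = 0 then 1 - u * d else A $$ (i,j))"
  have cA': "A' \<in> carrier_mat k k" unfolding A'_def by simp
  have "g 0 dvd u * d - 1" using u dvd_diff_swap by blast
  then have cong: "col_cong k g A A'" unfolding col_cong_def A'_def using col by auto
  have "A' $$ (i,0) = (if i = 0 then d else if i = 1 then 1 - u * d else 0)" if "i < k" for i
    unfolding A'_def using that col k by auto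
  then obtain P where P: "P \<in> E_group k"
    and col1: "\<forall>i<k. (P * A') $$ (i,0) = (if i = 0 then 1 else 0)"
    using E_group_first_col_to_unit[OF k cA'] by blast
  have cP: "P \<in> carrier_mat k k" by (rule E_group_carrier[OF P])
  show thesis
    using col1 by (intro that[OF P mult_carrier_mat[OF cP cA'] col_cong_mult_left[OF cP A cA' cong]]) simp
qed

lemma E_group_first_col_unit:
  assumes QE: "quasi_euclidean TYPE('a::comm_ring_1)" and k: "2 \<le> k"
    and A: "(A :: 'a mat) \<in> carrier_mat k k" and U: "rows_span k g A"
  obtains E A1 where "E \<in> E_group k" "A1 \<in> carrier_mat k k" "col_cong k g (E * A) A1"
    "\<And>i. i < k \<Longrightarrow> A1 $$ (i,0) = (if i = 0 then 1 else 0)"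
proof -
  obtain T d where T: "T \<in> E_group k"
    and col: "\<And>i. i < k \<Longrightarrow> (T * A) $$ (i,0) = (if i = 0 then d else 0)"
    using E_group_first_col_gcd[OF QE k A] by blast
  have cT: "T \<in> carrier_mat k k" by (rule E_group_carrier[OF T])
  obtain F where F: "F \<in> E_group k" "F * T = 1\<^sub>m k" using E_group_inverse[OF T] by blast
  have "rows_span k g (T * A)"
    using rows_span_mult_left[OF cT E_group_carrier[OF F(1)] F(2) A U] .
  then obtain r where r: "\<And>j. j < k \<Longrightarrow> g j dvd (if j = 0 then 1 else 0) - row_comb k r (T * A) j"
    using rows_spanD[where x = "\<lambda>j. if j = 0 then 1 else 0"] by blast
  have "row_comb k r (T * A) 0 = (\<Sum>i<k. if i = 0 then r 0 * d else 0)"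
    unfolding row_comb_def using col by (intro sum.cong) auto
  then have "g 0 dvd 1 - r 0 * d" using r[of 0] k by simp
  then obtain P A1 where P: "P \<in> E_group k" and A1: "A1 \<in> carrier_mat k k"
    and cong: "col_cong k g (P * (T * A)) A1"
    and col1: "\<And>i. i < k \<Longrightarrow> A1 $$ (i,0) = (if i = 0 then 1 else 0)"
    using E_group_first_col_unit_mod[OF k _ col] cT A by (metis mult_carrier_mat)
  have "P * (T * A) = (P * T) * A"
    using E_group_carrier[OF P] cT A by (simp add: assoc_mult_mat[of _ k k _ k _ k])
  then have "col_cong k g ((P * T) * A) A1" using cong by simp
  then show thesis by (rule that[OF E_group_mult[OF P T] A1 _ col1])
qed

lemma rows_span_minor:
  assumes A: "A \<in> carrier_mat (Suc m) (Suc m)"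
    and col: "\<And>i. i < Suc m \<Longrightarrow> A $$ (i,0) = (if i = 0 then 1 else 0)"
    and U: "rows_span (Suc m) g A" and chain: "\<And>c. 0 < c \<Longrightarrow> c \<le> m \<Longrightarrow> g c dvd g 0"
  shows "rows_span m (\<lambda>j. g (Suc j)) (mat_delete A 0 0)"
  unfolding rows_span_def
proof
  fix x' :: "nat \<Rightarrow> 'a"
  define x where "x c = (if c = 0 then 0 else x' (c - 1))" for c
  obtain r where r: "\<And>c. c < Suc m \<Longrightarrow> g c dvd x c - row_comb (Suc m) r A c"
    using rows_spanD[OF U] by blast
  have split: "row_comb (Suc m) r A c = r 0 * A $$ (0,c) + (\<Sum>i<m. r (Suc i) * A $$ (Suc i,c))" for c
    unfolding row_comb_def by (rule sum.lessThan_Suc_shift)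
  have "x 0 - row_comb (Suc m) r A 0 = - r 0" unfolding split x_def using col by simp
  then have r0: "g 0 dvd r 0" using r[of 0] by simp
  have "g (Suc c) dvd x' c - row_comb m (\<lambda>i. r (Suc i)) (mat_delete A 0 0) c" if c: "c < m" for c
  proof -
    have "x' c - row_comb m (\<lambda>i. r (Suc i)) (mat_delete A 0 0) c
        = (x (Suc c) - row_comb (Suc m) r A (Suc c)) + r 0 * A $$ (0, Suc c)"
      unfolding split using c A by (simp add: x_def row_comb_def mat_delete_0_0_index)
    also have "g (Suc c) dvd \<dots>"
      using r[of "Suc c"] dvd_trans[OF chain[of "Suc c"] r0] c by (intro dvd_add dvd_mult2) auto
    finally show ?thesis .
  qed
  then show "\<exists>r. \<forall>j<m. g (Suc j) dvd x' j - row_comb m r (mat_delete A 0 0) j" by blast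
qed

lemma E_group_subtract_rows_from_first:
  assumes A: "A \<in> carrier_mat (Suc m) (Suc m)"
  shows "n \<le> m \<Longrightarrow> \<exists>E\<in>E_group (Suc m). E * A = mat (Suc m) (Suc m) (\<lambda>(i,j).
    if i = 0 then A $$ (0,j) - (\<Sum>l<n. r l * A $$ (Suc l, j)) else A $$ (i,j))"
proof (induction n)
  case 0
  have "1\<^sub>m (Suc m) * A = mat (Suc m) (Suc m) (\<lambda>(i,j).
      if i = 0 then A $$ (0,j) - (\<Sum>l<0. r l * A $$ (Suc l, j)) else A $$ (i,j))"
    using A by (intro eq_matI) auto
  then show ?case using E_group.one by blast
next
  case (Suc n)
  then obtain E where E: "E \<in> E_group (Suc m)" "E * A = mat (Suc m) (Suc m) (\<lambda>(i,j).
      if i = 0 then A $$ (0,j) - (\<Sum>l<n. r l * A $$ (Suc l, j)) else A $$ (i,j))"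
    by auto
  define P where "P = addrow_mat (Suc m) (- r n) 0 (Suc n)"
  have P: "P \<in> E_group (Suc m)" unfolding P_def using Suc.prems by (intro addrow_mat_in_E_group) auto
  have "(P * E) * A = P * (E * A)"
    using E_group_carrier[OF E(1)] A unfolding P_def by (intro assoc_mult_mat) auto
  also have "\<dots> = addrow (- r n) 0 (Suc n) (E * A)"
  proof -
    have "E * A \<in> carrier_mat (Suc m) (Suc m)" using E_group_carrier[OF E(1)] A by simp
    then show ?thesis unfolding P_def by (rule addrow_mat[symmetric]) (use Suc.prems in simp)
  qed
  also have "\<dots> = mat (Suc m) (Suc m) (\<lambda>(i,j).
      if i = 0 then A $$ (0,j) - (\<Sum>l<Suc n. r l * A $$ (Suc l, j)) else A $$ (i,j))"
    unfolding E(2) using Suc.prems by (intro eq_matI) auto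
  finally show ?case using E_group_mult[OF P E(1)] by blast
qed

lemma E_group_clear_first_row:
  assumes A: "A \<in> carrier_mat (Suc m) (Suc m)"
    and col: "\<And>i. i < Suc m \<Longrightarrow> A $$ (i,0) = (if i = 0 then 1 else 0)"
    and r: "\<And>j. j < m \<Longrightarrow> g (Suc j) dvd A $$ (0, Suc j) - row_comb m r (mat_delete A 0 0) j"
  obtains E where "E \<in> E_group (Suc m)" "col_cong (Suc m) g (E * A) (lift_mat (mat_delete A 0 0))"
proof -
  let ?k = "Suc m"
  let ?B = "mat ?k ?k (\<lambda>(i,j). if i = 0 then A $$ (0,j) - (\<Sum>l<m. r l * A $$ (Suc l, j)) else A $$ (i,j))"
  obtain E where E: "E \<in> E_group ?k" "E * A = ?B"
    using E_group_subtract_rows_from_first[OF A, of m r] by blast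
  have minor: "mat_delete A 0 0 \<in> carrier_mat m m" by (rule mat_delete_0_0_carrier[OF A])
  have "col_cong ?k g ?B (lift_mat (mat_delete A 0 0))"
    unfolding col_cong_def
  proof (intro allI impI)
    fix i j assume i: "i < ?k" and j: "j < ?k"
    show "g j dvd ?B $$ (i,j) - lift_mat (mat_delete A 0 0) $$ (i,j)"
    proof (cases "i = 0 \<and> j \<noteq> 0")
      case True
      then obtain j' where j': "j = Suc j'" "j' < m" using j by (cases j) auto
      have "(\<Sum>l<m. r l * A $$ (Suc l, j)) = row_comb m r (mat_delete A 0 0) j'"
        unfolding row_comb_def using j' A by (intro sum.cong) (auto simp: mat_delete_0_0_index)
      then show ?thesis using True r[OF j'(2)] j' i by (simp add: lift_mat_index[OF minor])
    next
      case False
      then show ?thesis using i j col A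
        by (cases i) (auto simp: lift_mat_index[OF minor] mat_delete_0_0_index)
    qed
  qed
  then show thesis using E(2) by (intro that[OF E(1)]) simp
qed

lemma E_group_reduce_to_minor:
  assumes QE: "quasi_euclidean TYPE('a::comm_ring_1)" and m: "0 < m"
    and chain: "\<And>c. 0 < c \<Longrightarrow> c \<le> m \<Longrightarrow> g c dvd g 0"
    and A: "(A :: 'a mat) \<in> carrier_mat (Suc m) (Suc m)" and U: "rows_span (Suc m) g A"
  obtains E A' where "E \<in> E_group (Suc m)" "A' \<in> carrier_mat m m"
    "col_cong (Suc m) g (E * A) (lift_mat A')" "rows_span m (\<lambda>c. g (Suc c)) A'"
    "det A - det A' \<in> gen_ideal (Suc m) g"
proof -
  let ?k = "Suc m"
  obtain E1 A1 where E1: "E1 \<in> E_group ?k" and A1: "A1 \<in> carrier_mat ?k ?k"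
    and c1: "col_cong ?k g (E1 * A) A1" and col: "\<And>i. i < ?k \<Longrightarrow> A1 $$ (i,0) = (if i = 0 then 1 else 0)"
    using E_group_first_col_unit[OF QE _ A U] m by auto
  have cE1: "E1 \<in> carrier_mat ?k ?k" by (rule E_group_carrier[OF E1])
  obtain F1 where F1: "F1 \<in> E_group ?k" "F1 * E1 = 1\<^sub>m ?k" using E_group_inverse[OF E1] by blast
  have U1: "rows_span ?k g A1"
    using rows_span_col_cong[OF c1 rows_span_mult_left[OF cE1 E_group_carrier[OF F1(1)] F1(2) A U]] .
  define A' where "A' = mat_delete A1 0 0"
  have cA': "A' \<in> carrier_mat m m" unfolding A'_def by (rule mat_delete_0_0_carrier[OF A1])
  have U': "rows_span m (\<lambda>c. g (Suc c)) A'"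
    unfolding A'_def using rows_span_minor[OF A1 col U1 chain] .
  obtain r where "\<And>j. j < m \<Longrightarrow> g (Suc j) dvd A1 $$ (0, Suc j) - row_comb m r A' j"
    using rows_spanD[OF U', where x = "\<lambda>j. A1 $$ (0, Suc j)"] by blast
  then obtain E2 where E2: "E2 \<in> E_group ?k" and c2: "col_cong ?k g (E2 * A1) (lift_mat A')"
    using E_group_clear_first_row[OF A1 col] unfolding A'_def by blast
  have cE2: "E2 \<in> carrier_mat ?k ?k" by (rule E_group_carrier[OF E2])
  have "col_cong ?k g (E2 * (E1 * A)) (E2 * A1)"
    using col_cong_mult_left[OF cE2 _ A1 c1] cE1 A by simp
  moreover have "E2 * (E1 * A) = (E2 * E1) * A"
    using cE2 cE1 A by (simp add: assoc_mult_mat[of _ ?k ?k _ ?k _ ?k])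
  ultimately have c3: "col_cong ?k g ((E2 * E1) * A) (lift_mat A')"
    using col_cong_trans[OF _ c2] by simp
  have "det ((E2 * E1) * A) = det A"
    using det_mult[OF _ A, of "E2 * E1"] cE1 cE2 det_E_group[OF E_group_mult[OF E2 E1]] by simp
  then have "det A - det A' \<in> gen_ideal ?k g"
    using det_col_cong[OF _ lift_mat_carrier[OF cA'] c3] det_lift_mat[OF cA'] cE1 cE2 A by simp
  then show thesis by (rule that[OF E_group_mult[OF E2 E1] cA' c3 U'])
qed

lemma col_cong_through_minors:
  assumes EA: "EA \<in> E_group (Suc m)" and EB: "EB \<in> E_group (Suc m)" and E': "E' \<in> E_group m"
    and A: "A \<in> carrier_mat (Suc m) (Suc m)" and B: "B \<in> carrier_mat (Suc m) (Suc m)"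
    and A': "A' \<in> carrier_mat m m" and B': "B' \<in> carrier_mat m m"
    and cA: "col_cong (Suc m) g (EA * A) (lift_mat A')"
    and cB: "col_cong (Suc m) g (EB * B) (lift_mat B')"
    and c': "col_cong m (\<lambda>c. g (Suc c)) (E' * A') B'"
  shows "\<exists>E\<in>E_group (Suc m). col_cong (Suc m) g (E * A) B"
proof -
  let ?k = "Suc m"
  have cE': "E' \<in> carrier_mat m m" by (rule E_group_carrier[OF E'])
  have cEA: "EA \<in> carrier_mat ?k ?k" and cEB: "EB \<in> carrier_mat ?k ?k"
    and cL: "lift_mat E' \<in> carrier_mat ?k ?k"
    using E_group_carrier EA EB lift_mat_carrier[OF cE'] by auto
  obtain FB where FB: "FB \<in> E_group ?k" "FB * EB = 1\<^sub>m ?k" using E_group_inverse[OF EB] by blast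
  have cFB: "FB \<in> carrier_mat ?k ?k" by (rule E_group_carrier[OF FB(1)])
  have "col_cong ?k g (lift_mat E' * lift_mat A') (lift_mat B')"
    using col_cong_lift_mat[OF _ B' c'] lift_mat_mult[OF cE' A'] cE' A' by simp
  moreover have "col_cong ?k g (lift_mat E' * (EA * A)) (lift_mat E' * lift_mat A')"
    using col_cong_mult_left[OF cL _ lift_mat_carrier[OF A'] cA] cEA A by simp
  ultimately have "col_cong ?k g (lift_mat E' * (EA * A)) (EB * B)"
    using col_cong_trans col_cong_sym[OF cB] by blast
  then have "col_cong ?k g (FB * (lift_mat E' * (EA * A))) (FB * (EB * B))"
    using col_cong_mult_left[OF cFB] cL cEA A cEB B by simp
  moreover have "FB * (EB * B) = B"
    using assoc_mult_mat[OF cFB cEB B] FB(2) B by simp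
  moreover have "FB * (lift_mat E' * (EA * A)) = (FB * (lift_mat E' * EA)) * A"
    using cFB cL cEA A by (simp add: assoc_mult_mat[of _ ?k ?k _ ?k _ ?k])
  moreover have "FB * (lift_mat E' * EA) \<in> E_group ?k"
    using E_group_mult[OF FB(1) E_group_mult[OF lift_mat_E_group[OF E'] EA]] .
  ultimately show ?thesis by auto
qed

lemma det_classifies_Suc:
  assumes QE: "quasi_euclidean TYPE('a::comm_ring_1)" and m: "0 < m"
    and chain: "\<And>c. 0 < c \<Longrightarrow> c \<le> m \<Longrightarrow> (g :: nat \<Rightarrow> 'a) c dvd g 0"
    and IH: "det_classifies m (\<lambda>c. g (Suc c))"
  shows "det_classifies (Suc m) g"
  unfolding det_classifies_def
proof (intro ballI impI)
  let ?k = "Suc m" and ?g' = "\<lambda>c. g (Suc c)"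
  fix A B :: "'a mat"
  assume A: "A \<in> carrier_mat ?k ?k" and B: "B \<in> carrier_mat ?k ?k"
    and UA: "rows_span ?k g A" and UB: "rows_span ?k g B" and d: "det A - det B \<in> gen_ideal ?k g"
  obtain EA A' where EA: "EA \<in> E_group ?k" and A': "A' \<in> carrier_mat m m"
    and cA: "col_cong ?k g (EA * A) (lift_mat A')" and UA': "rows_span m ?g' A'"
    and dA: "det A - det A' \<in> gen_ideal ?k g"
    by (rule E_group_reduce_to_minor[OF QE m chain A UA])
  obtain EB B' where EB: "EB \<in> E_group ?k" and B': "B' \<in> carrier_mat m m"
    and cB: "col_cong ?k g (EB * B) (lift_mat B')" and UB': "rows_span m ?g' B'"
    and dB: "det B - det B' \<in> gen_ideal ?k g"
    by (rule E_group_reduce_to_minor[OF QE m chain B UB])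
  have "det A' - det B' = (det A - det B) - (det A - det A') + (det B - det B')" by simp
  then have "det A' - det B' \<in> gen_ideal ?k g"
    using d dA dB by (metis ideal_add ideal_diff is_ideal_gen_ideal)
  moreover have "g 1 dvd g 0" using chain m by simp
  ultimately have "det A' - det B' \<in> gen_ideal m ?g'" by (rule gen_ideal_Suc_shift[OF _ m])
  then obtain E' where E': "E' \<in> E_group m" and c': "col_cong m ?g' (E' * A') B'"
    using IH[unfolded det_classifies_def, rule_format, OF A' B' UA' UB'] by blast
  show "\<exists>E\<in>E_group ?k. col_cong ?k g (E * A) B"
    by (rule col_cong_through_minors[OF EA EB E' A B A' B' cA cB c'])
qed

section \<open>Replacing two generators by their lcm and gcd\<close>

definition mix_mat :: "nat \<Rightarrow> nat \<Rightarrow> 'a::comm_ring_1 \<Rightarrow> 'a \<Rightarrow> 'a \<Rightarrow> 'a \<Rightarrow> 'a mat" where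
  "mix_mat k c \<alpha> \<beta> \<gamma> \<delta> = mat k k (\<lambda>(i,j).
     if i = 0 \<and> j = 0 then \<alpha> else if i = 0 \<and> j = c then \<beta>
     else if i = c \<and> j = 0 then \<gamma> else if i = c \<and> j = c then \<delta>
     else if i = j then 1 else 0)"

lemma mix_mat_carrier: "mix_mat k c \<alpha> \<beta> \<gamma> \<delta> \<in> carrier_mat k k"
  unfolding mix_mat_def by simp

lemma row_comb_mix_mat:
  assumes c: "0 < c" "c < k" and j: "j < k"
  shows "row_comb k z (mix_mat k c \<alpha> \<beta> \<gamma> \<delta>) j =
    (if j = 0 then z 0 * \<alpha> + z c * \<gamma> else if j = c then z 0 * \<beta> + z c * \<delta> else z j)"
proof -
  let ?a = "if j = 0 then \<alpha> else if j = c then \<beta> else 0"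
  let ?b = "if j = 0 then \<gamma> else if j = c then \<delta> else 0"
  let ?e = "if j \<noteq> 0 \<and> j \<noteq> c then z j else 0"
  have "row_comb k z (mix_mat k c \<alpha> \<beta> \<gamma> \<delta>) j
      = (\<Sum>i<k. (if i = 0 then z 0 * ?a else 0) + (if i = c then z c * ?b else 0) + (if i = j then ?e else 0))"
    unfolding row_comb_def mix_mat_def using c j by (intro sum.cong) auto
  also have "\<dots> = z 0 * ?a + z c * ?b + ?e" using c j by (simp add: sum.distrib)
  finally show ?thesis by auto
qed

lemma mix_mat_mult:
  assumes c: "0 < c" "c < k"
  shows "mix_mat k c \<alpha> \<beta> \<gamma> \<delta> * mix_mat k c \<alpha>' \<beta>' \<gamma>' \<delta>' =
    mix_mat k c (\<alpha> * \<alpha>' + \<beta> * \<gamma>') (\<alpha> * \<beta>' + \<beta> * \<delta>') (\<gamma> * \<alpha>' + \<delta> * \<gamma>') (\<gamma> * \<beta>' + \<delta> * \<delta>')"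
  (is "?M * ?M' = ?N")
proof (rule eq_matI)
  fix i j assume "i < dim_row ?N" and "j < dim_col ?N"
  then have i: "i < k" and j: "j < k" by (simp_all add: mix_mat_def)
  have "(?M * ?M') $$ (i,j) = row_comb k (\<lambda>l. ?M $$ (i,l)) ?M' j"
    by (rule index_mult_mat_row_comb[OF mix_mat_carrier mix_mat_carrier i j])
  also have "\<dots> = ?N $$ (i,j)"
    unfolding row_comb_mix_mat[OF c j] using c i j by (auto simp: mix_mat_def)
  finally show "(?M * ?M') $$ (i,j) = ?N $$ (i,j)" .
qed (simp_all add: mix_mat_def)

lemma mix_mat_one: "0 < c \<Longrightarrow> mix_mat k c 1 0 0 1 = 1\<^sub>m k"
  unfolding mix_mat_def by (intro eq_matI) auto

lemma rows_span_mult_right: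
  assumes V: "V \<in> carrier_mat k k" and W: "W \<in> carrier_mat k k" and WV: "W * V = 1\<^sub>m k"
    and to_h: "\<And>z j. (\<And>l. l < k \<Longrightarrow> g l dvd z l) \<Longrightarrow> j < k \<Longrightarrow> h j dvd row_comb k z V j"
    and A: "A \<in> carrier_mat k k" and U: "rows_span k g A"
  shows "rows_span k h (A * V)"
  unfolding rows_span_def
proof
  fix x
  obtain r where r: "\<And>j. j < k \<Longrightarrow> g j dvd row_comb k x W j - row_comb k r A j"
    using rows_spanD[OF U, where x = "row_comb k x W"] by blast
  have "h j dvd x j - row_comb k r (A * V) j" if j: "j < k" for j
  proof -
    have "row_comb k (\<lambda>l. row_comb k x W l - row_comb k r A l) V j
        = row_comb k (row_comb k x W) V j - row_comb k (row_comb k r A) V j"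
      by (rule row_comb_diff[symmetric])
    also have "\<dots> = x j - row_comb k r (A * V) j"
      using row_comb_mult[OF W V j, of x] row_comb_mult[OF A V j, of r] row_comb_one[OF j, of x] WV
      by simp
    finally show ?thesis using to_h[OF r j] by simp
  qed
  then show "\<exists>r. \<forall>j<k. h j dvd x j - row_comb k r (A * V) j" by blast
qed

lemma col_cong_mult_right:
  assumes W: "W \<in> carrier_mat k k"
    and to_g: "\<And>z j. (\<And>l. l < k \<Longrightarrow> h l dvd z l) \<Longrightarrow> j < k \<Longrightarrow> g j dvd row_comb k z W j"
    and X: "X \<in> carrier_mat k k" and Y: "Y \<in> carrier_mat k k" and XY: "col_cong k h X Y"
  shows "col_cong k g (X * W) (Y * W)"
  unfolding col_cong_def
proof (intro allI impI)
  fix i j assume i: "i < k" and j: "j < k"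
  have "(X * W) $$ (i,j) - (Y * W) $$ (i,j) = row_comb k (\<lambda>l. X $$ (i,l) - Y $$ (i,l)) W j"
    unfolding index_mult_mat_row_comb[OF X W i j] index_mult_mat_row_comb[OF Y W i j]
    by (rule row_comb_diff)
  also have "g j dvd \<dots>" using XY i j unfolding col_cong_def by (intro to_g) auto
  finally show "g j dvd (X * W) $$ (i,j) - (Y * W) $$ (i,j)" .
qed

lemma det_classifies_transfer:
  assumes V: "V \<in> carrier_mat k k" and W: "W \<in> carrier_mat k k"
    and VW: "V * W = 1\<^sub>m k" and WV: "W * V = 1\<^sub>m k"
    and to_h: "\<And>z j. (\<And>l. l < k \<Longrightarrow> g l dvd z l) \<Longrightarrow> j < k \<Longrightarrow> h j dvd row_comb k z V j"
    and to_g: "\<And>z j. (\<And>l. l < k \<Longrightarrow> h l dvd z l) \<Longrightarrow> j < k \<Longrightarrow> g j dvd row_comb k z W j"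
    and gens: "\<And>j. j < k \<Longrightarrow> g j \<in> gen_ideal k h"
    and h: "det_classifies k h"
  shows "det_classifies k g"
  unfolding det_classifies_def
proof (intro ballI impI)
  fix A B :: "'a mat"
  assume A: "A \<in> carrier_mat k k" and B: "B \<in> carrier_mat k k"
    and UA: "rows_span k g A" and UB: "rows_span k g B" and d: "det A - det B \<in> gen_ideal k g"
  have "det (A * V) - det (B * V) = det V * (det A - det B)"
    using det_mult[OF A V] det_mult[OF B V] by (simp add: algebra_simps)
  also have "\<dots> \<in> gen_ideal k h"
    using gen_ideal_mono[OF gens d] by (rule ideal_mult[OF is_ideal_gen_ideal])
  finally obtain E where E: "E \<in> E_group k" and cong: "col_cong k h (E * (A * V)) (B * V)"
    using h[unfolded det_classifies_def, rule_format, OF mult_carrier_mat[OF A V]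
        mult_carrier_mat[OF B V] rows_span_mult_right[OF V W WV to_h A UA]
        rows_span_mult_right[OF V W WV to_h B UB]] by blast
  have cE: "E \<in> carrier_mat k k" by (rule E_group_carrier[OF E])
  have "col_cong k g ((E * (A * V)) * W) ((B * V) * W)"
    using col_cong_mult_right[OF W to_g _ _ cong] cE A B V by simp
  moreover have "(E * (A * V)) * W = E * A" using cE A V W VW by (simp add: assoc_mult_mat[of _ k k _ k _ k])
  moreover have "(B * V) * W = B" using B V W VW by (simp add: assoc_mult_mat[of _ k k _ k _ k])
  ultimately show "\<exists>E\<in>E_group k. col_cong k g (E * A) B" using E by auto
qed

lemma row_comb_mix_mat_dvd_lcm_gcd:
  assumes c: "0 < c" "c < k" and ab: "g 0 = d * a'" "g c = d * b'"
    and z: "\<And>l. l < k \<Longrightarrow> g l dvd z l" and j: "j < k"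
  shows "(g(0 := d * a' * b', c := d)) j dvd row_comb k z (mix_mat k c b' s (- a') t) j"
proof -
  obtain \<alpha> \<beta> where z0: "z 0 = g 0 * \<alpha>" and zc: "z c = g c * \<beta>"
    using z[of 0] z[of c] c unfolding dvd_def by auto
  have "z 0 * b' + z c * - a' = d * a' * b' * (\<alpha> - \<beta>)" "z 0 * s + z c * t = d * (a' * \<alpha> * s + b' * \<beta> * t)"
    unfolding z0 zc ab by (simp_all add: algebra_simps)
  then show ?thesis using z[OF j] c j unfolding row_comb_mix_mat[OF c j] by (auto intro: dvdI)
qed

lemma row_comb_mix_mat_dvd_factors:
  assumes c: "0 < c" "c < k" and ab: "g 0 = d * a'" "g c = d * b'"
    and z: "\<And>l. l < k \<Longrightarrow> (g(0 := d * a' * b', c := d)) l dvd z l" and j: "j < k"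
  shows "g j dvd row_comb k z (mix_mat k c t (- s) a' b') j"
proof -
  obtain \<alpha> \<beta> where z0: "z 0 = d * a' * b' * \<alpha>" and zc: "z c = d * \<beta>"
    using z[of 0] z[of c] c unfolding dvd_def by auto
  have "z 0 * t + z c * a' = g 0 * (b' * \<alpha> * t + \<beta>)" "z 0 * - s + z c * b' = g c * (\<beta> - a' * \<alpha> * s)"
    unfolding z0 zc ab by (simp_all add: algebra_simps)
  then show ?thesis using z[OF j] c j unfolding row_comb_mix_mat[OF c j] by (auto intro: dvdI)
qed

lemma det_classifies_gcd_exchange:
  fixes g :: "nat \<Rightarrow> 'a::comm_ring_1"
  assumes QE: "quasi_euclidean TYPE('a)" and c: "0 < c" "c < k"
  obtains h where "\<And>j. j \<noteq> 0 \<Longrightarrow> j \<noteq> c \<Longrightarrow> h j = g j" "g 0 dvd h 0" "h c dvd h 0"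
    "det_classifies k h \<Longrightarrow> det_classifies k g"
proof -
  obtain d a' b' s t where ab: "g 0 = d * a'" "g c = d * b'" and st: "s * a' + t * b' = 1"
    using quasi_euclidean_bezout[OF QE, of "g 0" "g c"] by blast
  \<comment> \<open>\<open>h 0\<close> and \<open>h c\<close> are an lcm and a gcd of \<open>g 0\<close> and \<open>g c\<close>; the unimodular matrix
    \<open>[[b', s], [-a', t]]\<close> on coordinates \<open>0, c\<close> realises \<open>R/(g 0) \<oplus> R/(g c) \<cong> R/(h 0) \<oplus> R/(h c)\<close>\<close>
  define h where "h = g(0 := d * a' * b', c := d)"
  have hj: "\<And>j. j \<noteq> 0 \<Longrightarrow> j \<noteq> c \<Longrightarrow> h j = g j" unfolding h_def by simp
  have VW: "mix_mat k c b' s (- a') t * mix_mat k c t (- s) a' b' = 1\<^sub>m k"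
    and WV: "mix_mat k c t (- s) a' b' * mix_mat k c b' s (- a') t = 1\<^sub>m k"
    unfolding mix_mat_mult[OF c] using st mix_mat_one[OF c(1)] by (simp_all add: algebra_simps)
  have gens: "g j \<in> gen_ideal k h" if "j < k" for j
  proof (cases "j = 0 \<or> j = c")
    case True
    then have "h c dvd g j" using ab c unfolding h_def by auto
    then show ?thesis using c by (intro gen_ideal_dvd_generator[of c]) auto
  next
    case False
    then show ?thesis using that hj by (intro gen_ideal_dvd_generator[of j]) auto
  qed
  have transfer: "det_classifies k g" if "det_classifies k h"
    by (rule det_classifies_transfer[OF mix_mat_carrier mix_mat_carrier VW WV
          row_comb_mix_mat_dvd_lcm_gcd[OF c ab, folded h_def]
          row_comb_mix_mat_dvd_factors[OF c ab, folded h_def] gens that])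
  have dvd: "g 0 dvd h 0" "h c dvd h 0" unfolding h_def using ab c by simp_all
  show thesis by (rule that[OF hj dvd transfer])
qed

lemma det_classifies_divisor_chain:
  fixes g :: "nat \<Rightarrow> 'a::comm_ring_1"
  assumes QE: "quasi_euclidean TYPE('a)"
  shows "n \<le> k \<Longrightarrow> \<exists>h :: nat \<Rightarrow> 'a. (det_classifies k h \<longrightarrow> det_classifies k g)
    \<and> (\<forall>c. 0 < c \<and> c < n \<longrightarrow> h c dvd h 0)"
proof (induction n)
  case 0
  show ?case by (intro exI[of _ g]) simp
next
  case (Suc n)
  then obtain h1 :: "nat \<Rightarrow> 'a" where h1: "det_classifies k h1 \<longrightarrow> det_classifies k g"
    "\<forall>c. 0 < c \<and> c < n \<longrightarrow> h1 c dvd h1 0"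
    by auto
  show ?case
  proof (cases "n = 0")
    case True
    then show ?thesis using h1 by auto
  next
    case False
    then have "0 < n" "n < k" using Suc.prems by auto
    then obtain h2 :: "nat \<Rightarrow> 'a" where h2: "\<And>j. j \<noteq> 0 \<Longrightarrow> j \<noteq> n \<Longrightarrow> h2 j = h1 j" "h1 0 dvd h2 0"
      "h2 n dvd h2 0" "det_classifies k h2 \<Longrightarrow> det_classifies k h1"
      by (rule det_classifies_gcd_exchange[OF QE, where g = h1]) blast
    have "h2 c dvd h2 0" if "0 < c" "c < Suc n" for c
    proof (cases "c = n")
      case True
      then show ?thesis using h2(3) by simp
    next
      case False
      then show ?thesis using h1(2) h2(1,2) that dvd_trans by fastforce
    qed
    then show ?thesis using h1(1) h2(4) by blast
  qed
qed

lemma det_classifies_all: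
  assumes QE: "quasi_euclidean TYPE('a::comm_ring_1)"
  shows "det_classifies k (g :: nat \<Rightarrow> 'a)"
proof (induction k arbitrary: g)
  case 0
  then show ?case by (rule det_classifies_le_1) simp
next
  case (Suc m)
  show ?case
  proof (cases "m = 0")
    case True
    then show ?thesis by (intro det_classifies_le_1) simp
  next
    case False
    obtain h :: "nat \<Rightarrow> 'a" where h: "det_classifies (Suc m) h \<longrightarrow> det_classifies (Suc m) g"
      "\<forall>c. 0 < c \<and> c < Suc m \<longrightarrow> h c dvd h 0"
      using det_classifies_divisor_chain[OF QE, of "Suc m" "Suc m" g] by blast
    have m: "0 < m" using False by simp
    have chain: "\<And>c. 0 < c \<Longrightarrow> c \<le> m \<Longrightarrow> h c dvd h 0" using h(2) by simp
    have "det_classifies (Suc m) h" by (rule det_classifies_Suc[OF QE m chain Suc.IH[of "\<lambda>c. h (Suc c)"]])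
    then show ?thesis using h(1) by blast
  qed
qed

section \<open>Passing to generators of the ideals \<open>\<bb>\<^sub>j\<close>\<close>

lemma ideal_sum_principal:
  assumes b: "\<And>j. j < k \<Longrightarrow> b j = {x. g j dvd x}"
  shows "ideal_sum k b = gen_ideal k g"
proof
  show "ideal_sum k b \<subseteq> gen_ideal k g"
  proof
    fix y assume "y \<in> ideal_sum k b"
    then obtain x where x: "\<forall>j<k. x j \<in> b j" and y: "y = (\<Sum>j<k. x j)"
      unfolding ideal_sum_def by blast
    have "(\<Sum>j<k. x j) \<in> gen_ideal k g"
      using x b by (intro ideal_sum_closed[OF is_ideal_gen_ideal]) (auto intro: gen_ideal_dvd_generator)
    then show "y \<in> gen_ideal k g" using y by simp
  qed
  show "gen_ideal k g \<subseteq> ideal_sum k b"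
  proof
    fix y assume "y \<in> gen_ideal k g"
    then obtain s where y: "y = (\<Sum>j<k. s j * g j)" unfolding gen_ideal_def by blast
    have "\<forall>j<k. s j * g j \<in> b j" using b by simp
    then show "y \<in> ideal_sum k b"
      unfolding ideal_sum_def y by (intro CollectI exI[of _ "\<lambda>j. s j * g j"]) simp
  qed
qed

lemma Um_principal_iff:
  assumes "\<And>j. j < k \<Longrightarrow> b j = {x. g j dvd x}"
  shows "Um k b A \<longleftrightarrow> A \<in> carrier_mat k k \<and> rows_span k g A"
  using assms unfolding Um_def rows_span_def M_eq_def row_comb_def by simp

lemma E_equiv_principal_iff:
  assumes b: "\<And>j. j < k \<Longrightarrow> b j = {x. g j dvd x}" and m: "m \<in> carrier_mat k k"
  shows "E_equiv k b m m' \<longleftrightarrow> (\<exists>E\<in>E_group k. col_cong k g (E * m) m')"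
proof -
  have iff: "(\<forall>j<k. M_eq k b (\<lambda>c. m' $$ (j, c)) (\<lambda>c. \<Sum>i<k. E $$ (i, j) * m $$ (i, c)))
      \<longleftrightarrow> col_cong k g (transpose_mat E * m) m'" if "E \<in> E_group k" for E
  proof -
    have "(transpose_mat E * m) $$ (j,c) = (\<Sum>i<k. E $$ (i,j) * m $$ (i,c))" if "j < k" "c < k" for j c
      using index_mult_mat_sum[of "transpose_mat E" k k m k j c] E_group_carrier[OF \<open>E \<in> E_group k\<close>] m
        that by simp
    then show ?thesis unfolding M_eq_def col_cong_def using b by (auto simp: dvd_diff_swap)
  qed
  have "E_equiv k b m m' \<longleftrightarrow> (\<exists>E\<in>E_group k. col_cong k g (transpose_mat E * m) m')"
    unfolding E_equiv_def using iff by (rule bex_cong[OF refl])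
  also have "\<dots> \<longleftrightarrow> (\<exists>E\<in>E_group k. col_cong k g (E * m) m')"
  proof
    assume "\<exists>E\<in>E_group k. col_cong k g (transpose_mat E * m) m'"
    then obtain E where "E \<in> E_group k" "col_cong k g (transpose_mat E * m) m'" by blast
    then show "\<exists>E\<in>E_group k. col_cong k g (E * m) m'" using E_group_transpose by blast
  next
    assume "\<exists>E\<in>E_group k. col_cong k g (E * m) m'"
    then obtain E where "E \<in> E_group k" "col_cong k g (E * m) m'" by blast
    then show "\<exists>E\<in>E_group k. col_cong k g (transpose_mat E * m) m'"
      using E_group_transpose[of E k] by (intro bexI[of _ "transpose_mat E"]) simp_all
  qed
  finally show ?thesis .
qed

lemma E_group_orbit_iff_det:
  assumes QE: "quasi_euclidean TYPE('a::comm_ring_1)"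
    and A: "(A :: 'a mat) \<in> carrier_mat k k" and B: "B \<in> carrier_mat k k"
    and UA: "rows_span k g A" and UB: "rows_span k g B"
  shows "(\<exists>E\<in>E_group k. col_cong k g (E * A) B) \<longleftrightarrow> det A - det B \<in> gen_ideal k g"
proof
  assume "\<exists>E\<in>E_group k. col_cong k g (E * A) B"
  then obtain E where E: "E \<in> E_group k" and cong: "col_cong k g (E * A) B" by blast
  have "det (E * A) = det A" using det_mult[OF E_group_carrier[OF E] A] det_E_group[OF E] by simp
  then show "det A - det B \<in> gen_ideal k g"
    using det_col_cong[OF _ B cong] E_group_carrier[OF E] A by simp
next
  assume "det A - det B \<in> gen_ideal k g"
  then show "\<exists>E\<in>E_group k. col_cong k g (E * A) B"
    using det_classifies_all[OF QE, unfolded det_classifies_def, rule_format, OF A B UA UB] by blast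
qed

lemma noetherian_quasi_euclidean_generators:
  assumes N: "noetherian_ring TYPE('a::comm_ring_1)" and QE: "quasi_euclidean TYPE('a)"
    and I: "\<And>j. j < k \<Longrightarrow> is_ideal (b j :: 'a set)"
  obtains g where "\<And>j. j < k \<Longrightarrow> b j = {x. g j dvd x}"
proof -
  have "\<forall>j. \<exists>h. j < k \<longrightarrow> b j = {x. h dvd x}"
    using noetherian_quasi_euclidean_principal[OF N QE I] by blast
  from choice[OF this] obtain g where "\<forall>j. j < k \<longrightarrow> b j = {x. g j dvd x}" by blast
  then show thesis using that by blast
qed

theorem corollaryC:
  fixes b :: "nat \<Rightarrow> 'a::comm_ring_1 set" and k :: nat and m m' :: "'a mat"
  assumes "noetherian_ring TYPE('a)"
    and "quasi_euclidean TYPE('a)"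
    and "\<forall>j<k. proper_ideal (b j)"
    and "Um k b m" and "Um k b m'"
  shows "E_equiv k b m m' \<longleftrightarrow> det_eq_mod k b m m'"
proof -
  have "\<And>j. j < k \<Longrightarrow> is_ideal (b j)" using assms(3) unfolding proper_ideal_def by blast
  then obtain g where b: "\<And>j. j < k \<Longrightarrow> b j = {x. g j dvd x}"
    using noetherian_quasi_euclidean_generators[OF assms(1,2)] by blast
  have m: "m \<in> carrier_mat k k" "rows_span k g m" and m': "m' \<in> carrier_mat k k" "rows_span k g m'"
    using assms(4,5) Um_principal_iff[OF b] by auto
  have "E_equiv k b m m' \<longleftrightarrow> (\<exists>E\<in>E_group k. col_cong k g (E * m) m')"
    by (rule E_equiv_principal_iff[OF b m(1)])
  also have "\<dots> \<longleftrightarrow> det m - det m' \<in> gen_ideal k g"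
    by (rule E_group_orbit_iff_det[OF assms(2) m(1) m'(1) m(2) m'(2)])
  also have "\<dots> \<longleftrightarrow> det_eq_mod k b m m'" by (simp add: det_eq_mod_def ideal_sum_principal[OF b])
  finally show ?thesis .
qed

end
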